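(* Let $k\ge1$ and $0\le s\le k$. The determinant of the Gram matrix $G^k_s$ (defined in the context) is a nonzero polynomial in $\mathbb{Z}[x]$ with leading coefficient $1$.
   Context: Partition diagrams: for $k\ge1$ let $[k]=\{1,\dots,k\}$, $[k']=\{1',\dots,k'\}$; a $k$-partition diagram is a set partition of $[k]\cup[k']$ (vertices $1,\dots,k$ in a top row, $1',\dots,k'$ in a bottom row). A block meeting both $[k]$ and $[k']$ is a through class; other blocks are horizontal edges. The propagating number $\sharp^p(d)$ is the number of through classes of $d$. The product of diagrams $d_1,d_2$: place $d_1$ above $d_2$, identify the bottom vertices of $d_1$ with the top vertices of $d_2$ (forming a middle row), take the partition of the top row of $d_1$ and bottom row of $d_2$ induced by connectivity, giving a diagram $d_3$; let $l(d_1,d_2)$ be the number of connected components lying entirely in the middle row. Then $d_1\circ d_2=x^{l(d_1,d_2)}d_3$, and $\sharp^p(d_1 d_2)$ means $\sharp^p(d_3)$. Index set: $J^k_s$ is the set of pairs $D=(\pi,T)$ where $\pi$ is a set partition of $[k]$ and $T$ is a set of $s$ blocks of $\pi$. To $D$ associate the diagram $d_D$ whose blocks are $B\cup B'$ for $B\in T$, and $B$, $B'$ separately for $B\in\pi\setminus T$ (here $B'=\{i':i\in B\}$). Gram matrix: $G^k_s$ is the square matrix with rows and columns indexed by $J^k_s$ whose $(D,E)$ entry is $x^{l(d_D,d_E)}$ if $\sharp^p(d_D d_E)=s$ and $0$ otherwise. *)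

theory Defs
  imports "HOL-Library.Disjoint_Sets" "HOL-Combinatorics.Permutations"
          "HOL-Computational_Algebra.Polynomial"
begin

text \<open>Vertices are pairs (row, position).  In a k-partition diagram the top
  vertex i is (0,i) and the bottom vertex i' is (1,i), for i in {1..k}.\<close>

definition row :: "nat \<Rightarrow> nat \<Rightarrow> (nat \<times> nat) set" where
  "row r k = {(r, i) | i. i \<in> {1..k}}"

definition diag_verts :: "nat \<Rightarrow> (nat \<times> nat) set" where
  "diag_verts k = row 0 k \<union> row 1 k"

definition is_diagram :: "nat \<Rightarrow> (nat \<times> nat) set set \<Rightarrow> bool" where
  "is_diagram k d \<longleftrightarrow> partition_on (diag_verts k) d"

definition prop_num :: "nat \<Rightarrow> (nat \<times> nat) set set \<Rightarrow> nat" where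
  "prop_num k d = card {B \<in> d. B \<inter> row 0 k \<noteq> {} \<and> B \<inter> row 1 k \<noteq> {}}"

text \<open>Stacking: d1 occupies rows 0 (top) and 1 (middle); d2 is shifted down so that
  it occupies rows 1 (middle) and 2 (bottom).\<close>
definition shift_down :: "nat \<times> nat \<Rightarrow> nat \<times> nat" where
  "shift_down v = (fst v + 1, snd v)"

definition stack_rel :: "(nat \<times> nat) set set \<Rightarrow> (nat \<times> nat) set set \<Rightarrow> ((nat \<times> nat) \<times> (nat \<times> nat)) set" where
  "stack_rel d1 d2 = {(u, v). (\<exists>B\<in>d1. u \<in> B \<and> v \<in> B) \<or>
                             (\<exists>B\<in>d2. u \<in> shift_down ` B \<and> v \<in> shift_down ` B)}"

definition stack_comps :: "nat \<Rightarrow> (nat \<times> nat) set set \<Rightarrow> (nat \<times> nat) set set \<Rightarrow> (nat \<times> nat) set set" where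
  "stack_comps k d1 d2 = (row 0 k \<union> row 1 k \<union> row 2 k) // ((stack_rel d1 d2)\<^sup>+)"

definition lift_up :: "nat \<times> nat \<Rightarrow> nat \<times> nat" where
  "lift_up v = (if fst v = 2 then (1, snd v) else v)"

definition diag_prod :: "nat \<Rightarrow> (nat \<times> nat) set set \<Rightarrow> (nat \<times> nat) set set \<Rightarrow> (nat \<times> nat) set set" where
  "diag_prod k d1 d2 = {lift_up ` (C - row 1 k) | C. C \<in> stack_comps k d1 d2 \<and> \<not> C \<subseteq> row 1 k}"

definition loops :: "nat \<Rightarrow> (nat \<times> nat) set set \<Rightarrow> (nat \<times> nat) set set \<Rightarrow> nat" where
  "loops k d1 d2 = card {C \<in> stack_comps k d1 d2. C \<subseteq> row 1 k}"

definition J_set :: "nat \<Rightarrow> nat \<Rightarrow> (nat set set \<times> nat set set) set" where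
  "J_set k s = {(\<pi>, T). partition_on {1..k} \<pi> \<and> T \<subseteq> \<pi> \<and> card T = s}"

definition top_of :: "nat set \<Rightarrow> (nat \<times> nat) set" where
  "top_of B = (\<lambda>i. (0, i)) ` B"

definition bot_of :: "nat set \<Rightarrow> (nat \<times> nat) set" where
  "bot_of B = (\<lambda>i. (1, i)) ` B"

definition diag_of :: "nat set set \<times> nat set set \<Rightarrow> (nat \<times> nat) set set" where
  "diag_of D = (case D of (\<pi>, T) \<Rightarrow>
     {top_of B \<union> bot_of B | B. B \<in> T} \<union> {top_of B | B. B \<in> \<pi> - T} \<union> {bot_of B | B. B \<in> \<pi> - T})"

definition gram :: "nat \<Rightarrow> nat \<Rightarrow> nat set set \<times> nat set set \<Rightarrow> nat set set \<times> nat set set \<Rightarrow> int poly" where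
  "gram k s D E =
     (if prop_num k (diag_prod k (diag_of D) (diag_of E)) = s
      then [:0, 1:] ^ loops k (diag_of D) (diag_of E) else 0)"

definition det_on :: "'i set \<Rightarrow> ('i \<Rightarrow> 'i \<Rightarrow> 'a :: comm_ring_1) \<Rightarrow> 'a" where
  "det_on I M = (\<Sum>p \<in> {p. p permutes I}. of_int (sign p) * (\<Prod>i\<in>I. M i (p i)))"

definition gram_det :: "nat \<Rightarrow> nat \<Rightarrow> int poly" where
  "gram_det k s = det_on (J_set k s) (gram k s)"

end

theory Submission
  imports Defs
begin

text \<open>Stacking \<open>d\<^sub>D\<close> on itself, for \<open>D = (\<pi>, T)\<close>, closes every block of \<open>\<pi> - T\<close> into a loop
  and keeps every block of \<open>T\<close> propagating, so the diagonal entry of the Gram matrix is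
  \<open>x ^ |\<pi> - T|\<close>. Off the diagonal, every loop of \<open>d\<^sub>D d\<^sub>E\<close> is the middle-row component of a
  non-propagating block of \<open>\<pi>\<^sub>D\<close> and also of one of \<open>\<pi>\<^sub>E\<close>, so the number of loops is at most
  \<open>min |\<pi>\<^sub>D - T\<^sub>D| |\<pi>\<^sub>E - T\<^sub>E|\<close>. If both bounds were attained while the propagating number is
  \<open>s\<close>, then blocks \<mapsto> middle-row components would be injective on the non-propagating and on
  the propagating blocks of both diagrams; as overlapping blocks of the two partitions lie in the
  same component, this forces \<open>\<pi>\<^sub>D - T\<^sub>D = \<pi>\<^sub>E - T\<^sub>E\<close> and then \<open>T\<^sub>D = T\<^sub>E\<close>. So every nonzero
  off-diagonal entry \<open>x ^ l\<close> has \<open>2 l < |\<pi>\<^sub>D - T\<^sub>D| + |\<pi>\<^sub>E - T\<^sub>E|\<close>, and in the Leibniz expansion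
  only the identity permutation reaches the top degree, with coefficient 1.\<close>

lemma coeff_permutation_term_eq_0:
  fixes M :: "'i \<Rightarrow> 'i \<Rightarrow> 'a :: comm_ring_1 poly" and w :: "'i \<Rightarrow> nat"
  assumes "finite I"
    and diag: "\<And>i. i \<in> I \<Longrightarrow> M i i = [:0,1:] ^ w i"
    and off_diag: "\<And>i j. i \<in> I \<Longrightarrow> j \<in> I \<Longrightarrow> i \<noteq> j \<Longrightarrow> M i j \<noteq> 0 \<Longrightarrow>
                     \<exists>l. M i j = [:0,1:] ^ l \<and> 2 * l < w i + w j"
    and p: "p permutes I" "p \<noteq> id"
    and n: "(\<Sum>i\<in>I. w i) \<le> n"
  shows "coeff (\<Prod>i\<in>I. M i (p i)) n = 0"
proof (cases "\<exists>i\<in>I. M i (p i) = 0")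
  case True
  then show ?thesis using \<open>finite I\<close> by (simp add: prod_zero)
next
  case False
  have "\<exists>l. M i (p i) = [:0,1:] ^ l \<and> 2 * l \<le> w i + w (p i) \<and> (p i \<noteq> i \<longrightarrow> 2 * l < w i + w (p i))"
    if i: "i \<in> I" for i
  proof (cases "p i = i")
    case True
    then show ?thesis using diag[OF i] by auto
  next
    case False
    with off_diag[OF i permutes_in_image[OF p(1), THEN iffD2, OF i]] \<open>\<not> (\<exists>i\<in>I. M i (p i) = 0)\<close> i
    show ?thesis by (metis less_imp_le)
  qed
  then obtain L where L: "\<And>i. i \<in> I \<Longrightarrow> M i (p i) = [:0,1:] ^ L i \<and> 2 * L i \<le> w i + w (p i) \<and>
                                            (p i \<noteq> i \<longrightarrow> 2 * L i < w i + w (p i))"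
    by metis
  obtain i0 where i0: "i0 \<in> I" "p i0 \<noteq> i0"
    using p by (metis id_apply permutes_not_in ext)
  have "2 * (\<Sum>i\<in>I. L i) < (\<Sum>i\<in>I. w i + w (p i))"
    unfolding sum_distrib_left by (rule sum_strict_mono_ex1[OF \<open>finite I\<close>]) (use L i0 in auto)
  also have "\<dots> = 2 * (\<Sum>i\<in>I. w i)"
    using sum.permute[OF p(1), of w] by (simp add: sum.distrib comp_def)
  finally have "(\<Sum>i\<in>I. L i) < n" using n by linarith
  moreover have "(\<Prod>i\<in>I. M i (p i)) = monom 1 (\<Sum>i\<in>I. L i)"
    using L by (simp add: power_sum monom_altdef)
  ultimately show ?thesis by (simp add: coeff_monom)
qed

theorem det_on_monic_if_diagonal_dominant:
  fixes M :: "'i \<Rightarrow> 'i \<Rightarrow> 'a :: comm_ring_1 poly" and w :: "'i \<Rightarrow> nat"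
  assumes "finite I"
    and diag: "\<And>i. i \<in> I \<Longrightarrow> M i i = [:0,1:] ^ w i"
    and off_diag: "\<And>i j. i \<in> I \<Longrightarrow> j \<in> I \<Longrightarrow> i \<noteq> j \<Longrightarrow> M i j \<noteq> 0 \<Longrightarrow>
                     \<exists>l. M i j = [:0,1:] ^ l \<and> 2 * l < w i + w j"
  shows "degree (det_on I M) = (\<Sum>i\<in>I. w i) \<and> lead_coeff (det_on I M) = 1"
proof -
  define m where "m = (\<Sum>i\<in>I. w i)"
  define summand where "summand p = of_int (sign p) * (\<Prod>i\<in>I. M i (p i))" for p
  have "det_on I M = summand id + (\<Sum>p\<in>{p. p permutes I} - {id}. summand p)"
    unfolding det_on_def summand_def
    by (rule sum.remove) (simp_all add: finite_permutations[OF \<open>finite I\<close>] permutes_id)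
  moreover have "summand id = monom 1 m"
    using diag by (simp add: summand_def sign_id m_def power_sum monom_altdef)
  moreover have "coeff (summand p) n = 0" if "p permutes I" "p \<noteq> id" "m \<le> n" for p n
    using coeff_permutation_term_eq_0[OF assms that[unfolded m_def]]
    by (simp add: summand_def of_int_poly)
  ultimately have coeff_det: "coeff (det_on I M) n = (if n = m then 1 else 0)" if "m \<le> n" for n
    using that by (simp add: coeff_sum coeff_monom)
  have "degree (det_on I M) = m"
    by (rule antisym[OF degree_le le_degree]) (use coeff_det in auto)
  then show ?thesis using coeff_det m_def by simp
qed

lemma subset_image_card_eq:
  assumes "finite N" "L \<subseteq> f ` N" "card L = card N"
  shows "L = f ` N" "inj_on f N"
proof -
  have "card L \<le> card (f ` N)" using assms(1,2) by (intro card_mono) auto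
  then have card_image_eq: "card (f ` N) = card N" using card_image_le[OF assms(1), of f] assms(3) by linarith
  show "L = f ` N" using assms card_image_eq by (intro card_subset_eq) auto
  show "inj_on f N" using assms(1) card_image_eq by (rule eq_card_imp_inj_on)
qed

lemma partition_on_block_exists: "partition_on A P \<Longrightarrow> i \<in> A \<Longrightarrow> \<exists>B\<in>P. i \<in> B"
  by (auto dest: partition_onD1)

lemma partition_on_block_unique:
  "partition_on A P \<Longrightarrow> B \<in> P \<Longrightarrow> B' \<in> P \<Longrightarrow> i \<in> B \<Longrightarrow> i \<in> B' \<Longrightarrow> B = B'"
  by (auto dest: partition_onD2 disjointD)

lemma partition_on_block_subset: "partition_on A P \<Longrightarrow> B \<in> P \<Longrightarrow> B \<subseteq> A"
  by (auto dest: partition_onD1)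

lemma Min_in_partition_block:
  assumes "partition_on A P" "finite A" "B \<in> P"
  shows "Min B \<in> B"
proof -
  have "B \<noteq> {}" using assms(1,3) by (auto dest: partition_onD3)
  moreover have "finite B" using partition_on_block_subset[OF assms(1,3)] assms(2) finite_subset by blast
  ultimately show ?thesis by (rule Min_in[rotated])
qed

lemma partition_on_subfamily_subset:
  assumes P1: "partition_on A P1" and P2: "partition_on A P2"
    and N1: "N1 \<subseteq> P1" and N2: "N2 \<subseteq> P2"
    and const1: "\<And>B i j. B \<in> N1 \<Longrightarrow> i \<in> B \<Longrightarrow> j \<in> B \<Longrightarrow> c i = c j"
    and const2: "\<And>B i j. B \<in> N2 \<Longrightarrow> i \<in> B \<Longrightarrow> j \<in> B \<Longrightarrow> c i = c j"
    and sep1: "\<And>B B' i j. B \<in> N1 \<Longrightarrow> B' \<in> N1 \<Longrightarrow> i \<in> B \<Longrightarrow> j \<in> B' \<Longrightarrow> c i = c j \<Longrightarrow> B = B'"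
    and sep2: "\<And>B B' i j. B \<in> N2 \<Longrightarrow> B' \<in> N2 \<Longrightarrow> i \<in> B \<Longrightarrow> j \<in> B' \<Longrightarrow> c i = c j \<Longrightarrow> B = B'"
    and into2: "\<And>B B' i. B \<in> N1 \<Longrightarrow> B' \<in> P2 \<Longrightarrow> i \<in> B \<Longrightarrow> i \<in> B' \<Longrightarrow> B' \<in> N2"
    and into1: "\<And>B B' i. B \<in> P1 \<Longrightarrow> B' \<in> N2 \<Longrightarrow> i \<in> B \<Longrightarrow> i \<in> B' \<Longrightarrow> B \<in> N1"
  shows "N1 \<subseteq> N2"
proof
  fix B assume B: "B \<in> N1"
  then obtain i where i: "i \<in> B" using N1 partition_onD3[OF P1] by (metis ex_in_conv subsetD)
  then obtain B2 where B2: "B2 \<in> P2" "i \<in> B2"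
    using partition_on_block_exists[OF P2] partition_on_block_subset[OF P1] B N1 by blast
  have B2_N2: "B2 \<in> N2" using into2[OF B B2(1) i B2(2)] .
  have "B \<subseteq> B2"
  proof
    fix j assume j: "j \<in> B"
    then obtain B' where B': "B' \<in> P2" "j \<in> B'"
      using partition_on_block_exists[OF P2] partition_on_block_subset[OF P1] B N1 by blast
    have "B' \<in> N2" using into2[OF B B'(1) j B'(2)] .
    moreover have "c j = c i" using const1[OF B j i] .
    ultimately have "B' = B2" using sep2[OF _ B2_N2 B'(2) B2(2)] by blast
    then show "j \<in> B2" using B'(2) by simp
  qed
  moreover have "B2 \<subseteq> B"
  proof
    fix j assume j: "j \<in> B2"
    then obtain B' where B': "B' \<in> P1" "j \<in> B'"
      using partition_on_block_exists[OF P1] partition_on_block_subset[OF P2] B2 by blast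
    have "B' \<in> N1" using into1[OF B'(1) B2_N2 B'(2) j] .
    moreover have "c j = c i" using const2[OF B2_N2 j B2(2)] .
    ultimately have "B' = B" using sep1[OF _ B B'(2) i] by blast
    then show "j \<in> B" using B'(2) by simp
  qed
  ultimately show "B \<in> N2" using B2_N2 by simp
qed

lemma partition_on_subfamilies_eq:
  assumes "partition_on A P1" "partition_on A P2" "N1 \<subseteq> P1" "N2 \<subseteq> P2"
    and "\<And>B i j. B \<in> N1 \<Longrightarrow> i \<in> B \<Longrightarrow> j \<in> B \<Longrightarrow> c i = c j"
    and "\<And>B i j. B \<in> N2 \<Longrightarrow> i \<in> B \<Longrightarrow> j \<in> B \<Longrightarrow> c i = c j"
    and "\<And>B B' i j. B \<in> N1 \<Longrightarrow> B' \<in> N1 \<Longrightarrow> i \<in> B \<Longrightarrow> j \<in> B' \<Longrightarrow> c i = c j \<Longrightarrow> B = B'"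
    and "\<And>B B' i j. B \<in> N2 \<Longrightarrow> B' \<in> N2 \<Longrightarrow> i \<in> B \<Longrightarrow> j \<in> B' \<Longrightarrow> c i = c j \<Longrightarrow> B = B'"
    and "\<And>B B' i. B \<in> N1 \<Longrightarrow> B' \<in> P2 \<Longrightarrow> i \<in> B \<Longrightarrow> i \<in> B' \<Longrightarrow> B' \<in> N2"
    and "\<And>B B' i. B \<in> P1 \<Longrightarrow> B' \<in> N2 \<Longrightarrow> i \<in> B \<Longrightarrow> i \<in> B' \<Longrightarrow> B \<in> N1"
  shows "N1 = N2"
proof
  show "N1 \<subseteq> N2" by (rule partition_on_subfamily_subset[OF assms])
  show "N2 \<subseteq> N1"
    by (rule partition_on_subfamily_subset[OF assms(2,1,4,3,6,5,8,7)]) (use assms(9,10) in blast)+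
qed

lemma mem_row_iff [simp]: "(a, i) \<in> row r k \<longleftrightarrow> a = r \<and> 1 \<le> i \<and> i \<le> k"
  by (auto simp: row_def)

lemma diag_of_same_block_iff:
  assumes "T \<subseteq> P"
  shows "(\<exists>X\<in>diag_of (P, T). (r, i) \<in> X \<and> (r', j) \<in> X) \<longleftrightarrow>
           r \<le> 1 \<and> r' \<le> 1 \<and> (\<exists>B\<in>P. i \<in> B \<and> j \<in> B \<and> (r = r' \<or> B \<in> T))"
proof
  assume "\<exists>X\<in>diag_of (P, T). (r, i) \<in> X \<and> (r', j) \<in> X"
  then obtain X where X: "X \<in> diag_of (P, T)" "(r, i) \<in> X" "(r', j) \<in> X" by blast
  from X(1) consider B where "B \<in> T" "X = top_of B \<union> bot_of B"
    | B where "B \<in> P - T" "X = top_of B" | B where "B \<in> P - T" "X = bot_of B"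
    unfolding diag_of_def by blast
  then show "r \<le> 1 \<and> r' \<le> 1 \<and> (\<exists>B\<in>P. i \<in> B \<and> j \<in> B \<and> (r = r' \<or> B \<in> T))"
    by cases (use X assms in \<open>auto simp: top_of_def bot_of_def\<close>)
next
  assume "r \<le> 1 \<and> r' \<le> 1 \<and> (\<exists>B\<in>P. i \<in> B \<and> j \<in> B \<and> (r = r' \<or> B \<in> T))"
  then obtain B where B: "B \<in> P" "i \<in> B" "j \<in> B" "r = r' \<or> B \<in> T" and "r \<le> 1" "r' \<le> 1"
    by blast
  then consider "B \<in> T" | "B \<in> P - T" "r = 0" "r' = 0" | "B \<in> P - T" "r = 1" "r' = 1"
    by fastforce
  then show "\<exists>X\<in>diag_of (P, T). (r, i) \<in> X \<and> (r', j) \<in> X"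
  proof cases
    case 1
    then have "top_of B \<union> bot_of B \<in> diag_of (P, T)" unfolding diag_of_def by blast
    moreover have "(r, i) \<in> top_of B \<union> bot_of B" "(r', j) \<in> top_of B \<union> bot_of B"
      using B \<open>r \<le> 1\<close> \<open>r' \<le> 1\<close> by (auto simp: top_of_def bot_of_def le_Suc_eq)
    ultimately show ?thesis by blast
  next
    case 2
    then show ?thesis using B unfolding diag_of_def top_of_def by blast
  next
    case 3
    then show ?thesis using B unfolding diag_of_def bot_of_def by blast
  qed
qed

lemma mem_shift_down_iff: "(r, i) \<in> shift_down ` X \<longleftrightarrow> 1 \<le> r \<and> (r - 1, i) \<in> X"
  unfolding shift_down_def by (force simp: image_iff)

locale diagram_pair =
  fixes k :: nat and P1 T1 P2 T2 :: "nat set set"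
  assumes partition1: "partition_on {1..k} P1" and through1: "T1 \<subseteq> P1"
    and partition2: "partition_on {1..k} P2" and through2: "T2 \<subseteq> P2"
begin

definition adj :: "((nat \<times> nat) \<times> (nat \<times> nat)) set" where
  "adj = stack_rel (diag_of (P1, T1)) (diag_of (P2, T2))"

lemma adj_iff:
  "((r, i), (r', j)) \<in> adj \<longleftrightarrow>
     (r \<le> 1 \<and> r' \<le> 1 \<and> (\<exists>B\<in>P1. i \<in> B \<and> j \<in> B \<and> (r = r' \<or> B \<in> T1))) \<or>
     (1 \<le> r \<and> r \<le> 2 \<and> 1 \<le> r' \<and> r' \<le> 2 \<and> (\<exists>B\<in>P2. i \<in> B \<and> j \<in> B \<and> (r = r' \<or> B \<in> T2)))"
proof -
  have "((r, i), (r', j)) \<in> adj \<longleftrightarrow>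
          (\<exists>X\<in>diag_of (P1, T1). (r, i) \<in> X \<and> (r', j) \<in> X) \<or>
          (1 \<le> r \<and> 1 \<le> r' \<and> (\<exists>X\<in>diag_of (P2, T2). (r - 1, i) \<in> X \<and> (r' - 1, j) \<in> X))"
    by (simp add: adj_def stack_rel_def mem_shift_down_iff) blast
  then show ?thesis
    unfolding diag_of_same_block_iff[OF through1] diag_of_same_block_iff[OF through2]
    by (cases r; cases r') simp_all
qed

lemma block_in_range1: "B \<in> P1 \<Longrightarrow> i \<in> B \<Longrightarrow> i \<in> {1..k}"
  using partition_on_block_subset[OF partition1] by blast

lemma block_in_range2: "B \<in> P2 \<Longrightarrow> i \<in> B \<Longrightarrow> i \<in> {1..k}"
  using partition_on_block_subset[OF partition2] by blast

lemma Min_in_block1: "B \<in> P1 \<Longrightarrow> Min B \<in> B"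
  using Min_in_partition_block[OF partition1] by simp

lemma Min_in_block2: "B \<in> P2 \<Longrightarrow> Min B \<in> B"
  using Min_in_partition_block[OF partition2] by simp

definition verts :: "(nat \<times> nat) set" where
  "verts = row 0 k \<union> row 1 k \<union> row 2 k"

lemma mem_verts_iff: "(r, i) \<in> verts \<longleftrightarrow> r \<le> 2 \<and> i \<in> {1..k}"
  by (auto simp: verts_def)

lemma adj_in_verts: "(u, v) \<in> adj \<Longrightarrow> u \<in> verts \<and> v \<in> verts"
  by (cases u; cases v) (auto simp: adj_iff mem_verts_iff dest: block_in_range1 block_in_range2)

lemma adj_refl: "u \<in> verts \<Longrightarrow> (u, u) \<in> adj"
proof (cases u)
  case (Pair r i)
  assume "u \<in> verts"
  then have "r \<le> 2" "i \<in> {1..k}" using Pair mem_verts_iff by auto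
  moreover obtain B1 where "B1 \<in> P1" "i \<in> B1"
    using partition_on_block_exists[OF partition1 \<open>i \<in> {1..k}\<close>] by blast
  moreover obtain B2 where "B2 \<in> P2" "i \<in> B2"
    using partition_on_block_exists[OF partition2 \<open>i \<in> {1..k}\<close>] by blast
  ultimately show ?thesis using Pair by (auto simp: adj_iff)
qed

lemma adj_sym: "(u, v) \<in> adj \<Longrightarrow> (v, u) \<in> adj"
  by (cases u; cases v) (auto simp: adj_iff)

lemma equiv_adj_trancl: "equiv verts (adj\<^sup>+)"
proof (rule equivI)
  show "adj\<^sup>+ \<subseteq> verts \<times> verts" by (rule trancl_subset_Sigma) (use adj_in_verts in auto)
  show "refl_on verts (adj\<^sup>+)" unfolding refl_on_def using adj_refl by blast
  show "sym (adj\<^sup>+)" by (rule sym_trancl) (use adj_sym in \<open>auto simp: sym_def\<close>)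
  show "trans (adj\<^sup>+)" by (rule trans_trancl)
qed

definition comps :: "(nat \<times> nat) set set" where
  "comps = verts // adj\<^sup>+"

definition comp_of :: "nat \<times> nat \<Rightarrow> (nat \<times> nat) set" where
  "comp_of u = adj\<^sup>+ `` {u}"

lemma comp_of_in_comps: "u \<in> verts \<Longrightarrow> comp_of u \<in> comps"
  unfolding comp_of_def comps_def by (rule quotientI)

lemma mem_comp_of_self: "u \<in> verts \<Longrightarrow> u \<in> comp_of u"
  unfolding comp_of_def by (rule equiv_class_self[OF equiv_adj_trancl])

lemma comp_eq_comp_of: "C \<in> comps \<Longrightarrow> u \<in> C \<Longrightarrow> C = comp_of u"
  unfolding comps_def comp_of_def
  by (metis Image_singleton_iff equiv_class_eq[OF equiv_adj_trancl] quotientE)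

lemma comp_of_eq_if_adj: "(u, v) \<in> adj \<Longrightarrow> comp_of u = comp_of v"
  unfolding comp_of_def by (rule equiv_class_eq[OF equiv_adj_trancl r_into_trancl])

lemma comp_closed: "C \<in> comps \<Longrightarrow> u \<in> C \<Longrightarrow> (u, v) \<in> adj \<Longrightarrow> v \<in> C"
  unfolding comps_def by (rule in_quotient_imp_closed[OF equiv_adj_trancl]) auto

lemma comp_subset_verts: "C \<in> comps \<Longrightarrow> C \<subseteq> verts"
  unfolding comps_def by (rule in_quotient_imp_subset[OF equiv_adj_trancl])

lemma comp_nonempty: "C \<in> comps \<Longrightarrow> C \<noteq> {}"
  unfolding comps_def by (rule in_quotient_imp_non_empty[OF equiv_adj_trancl])

lemma comp_subset_if_closed:
  assumes closed: "\<And>u v. (u, v) \<in> adj \<Longrightarrow> u \<in> X \<Longrightarrow> v \<in> X"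
    and C: "C \<in> comps" "u \<in> C" "u \<in> X"
  shows "C \<subseteq> X"
proof
  fix v assume "v \<in> C"
  then have "(u, v) \<in> adj\<^sup>+" using comp_eq_comp_of[OF C(1,2)] by (simp add: comp_of_def)
  then show "v \<in> X" by (induction rule: trancl_induct) (use closed C(3) in blast)+
qed

definition block_comp :: "nat set \<Rightarrow> (nat \<times> nat) set" where
  "block_comp B = comp_of (1, Min B)"

lemma block_comp_eq1:
  assumes "B \<in> P1" "i \<in> B"
  shows "block_comp B = comp_of (1, i)"
  unfolding block_comp_def
  by (rule comp_of_eq_if_adj) (use assms Min_in_block1 in \<open>auto simp: adj_iff\<close>)

lemma block_comp_eq2:
  assumes "B \<in> P2" "i \<in> B"
  shows "block_comp B = comp_of (1, i)"
  unfolding block_comp_def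
  by (rule comp_of_eq_if_adj) (use assms Min_in_block2 in \<open>auto simp: adj_iff\<close>)

lemma top_block_closed:
  assumes "B \<in> P1 - T1" "(u, v) \<in> adj" "u \<in> Pair 0 ` B"
  shows "v \<in> Pair 0 ` B"
proof -
  obtain j where u: "u = (0, j)" "j \<in> B" using assms(3) by blast
  obtain r' j' where v: "v = (r', j')" by (cases v)
  from assms(2)[unfolded u v adj_iff] obtain B' where
    B': "B' \<in> P1" "j \<in> B'" "j' \<in> B'" "r' = 0 \<or> B' \<in> T1" by auto
  have "B' = B" using partition_on_block_unique[OF partition1 B'(1) _ B'(2) u(2)] assms(1) by blast
  then show ?thesis using B' assms(1) v by auto
qed

lemma bottom_block_closed:
  assumes "B \<in> P2 - T2" "(u, v) \<in> adj" "u \<in> Pair 2 ` B"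
  shows "v \<in> Pair 2 ` B"
proof -
  obtain j where u: "u = (2, j)" "j \<in> B" using assms(3) by blast
  obtain r' j' where v: "v = (r', j')" by (cases v)
  from assms(2)[unfolded u v adj_iff] obtain B' where
    B': "B' \<in> P2" "j \<in> B'" "j' \<in> B'" "r' = 2 \<or> B' \<in> T2" by auto
  have "B' = B" using partition_on_block_unique[OF partition2 B'(1) _ B'(2) u(2)] assms(1) by blast
  then show ?thesis using B' assms(1) v by auto
qed

definition loop_comps :: "(nat \<times> nat) set set" where
  "loop_comps = {C \<in> comps. C \<subseteq> row 1 k}"

definition through_comps :: "(nat \<times> nat) set set" where
  "through_comps = {C \<in> comps. C \<inter> row 0 k \<noteq> {} \<and> C \<inter> row 2 k \<noteq> {}}"

lemma loop_comps_subset1: "loop_comps \<subseteq> block_comp ` (P1 - T1)"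
proof
  fix C assume "C \<in> loop_comps"
  then have C: "C \<in> comps" "C \<subseteq> row 1 k" by (auto simp: loop_comps_def)
  obtain x where "x \<in> C" using comp_nonempty[OF C(1)] by blast
  then obtain i where i: "(1, i) \<in> C" "i \<in> {1..k}" using C(2) by (cases x) auto
  then obtain B where B: "B \<in> P1" "i \<in> B" using partition_on_block_exists[OF partition1] by blast
  have "B \<notin> T1"
  proof
    assume "B \<in> T1"
    then have "((1, i), (0, i)) \<in> adj" using B by (auto simp: adj_iff)
    then have "(0, i) \<in> C" by (rule comp_closed[OF C(1) i(1)])
    then show False using C(2) by auto
  qed
  moreover have "C = block_comp B" using comp_eq_comp_of[OF C(1) i(1)] block_comp_eq1[OF B] by simp
  ultimately show "C \<in> block_comp ` (P1 - T1)" using B by blast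
qed

lemma loop_comps_subset2: "loop_comps \<subseteq> block_comp ` (P2 - T2)"
proof
  fix C assume "C \<in> loop_comps"
  then have C: "C \<in> comps" "C \<subseteq> row 1 k" by (auto simp: loop_comps_def)
  obtain x where "x \<in> C" using comp_nonempty[OF C(1)] by blast
  then obtain i where i: "(1, i) \<in> C" "i \<in> {1..k}" using C(2) by (cases x) auto
  then obtain B where B: "B \<in> P2" "i \<in> B" using partition_on_block_exists[OF partition2] by blast
  have "B \<notin> T2"
  proof
    assume "B \<in> T2"
    then have "((1, i), (2, i)) \<in> adj" using B by (auto simp: adj_iff)
    then have "(2, i) \<in> C" by (rule comp_closed[OF C(1) i(1)])
    then show False using C(2) by auto
  qed
  moreover have "C = block_comp B" using comp_eq_comp_of[OF C(1) i(1)] block_comp_eq2[OF B] by simp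
  ultimately show "C \<in> block_comp ` (P2 - T2)" using B by blast
qed

lemma through_comps_subset1: "through_comps \<subseteq> block_comp ` T1"
proof
  fix C assume "C \<in> through_comps"
  then have C: "C \<in> comps" "C \<inter> row 0 k \<noteq> {}" "C \<inter> row 2 k \<noteq> {}" by (auto simp: through_comps_def)
  then obtain x where "x \<in> C" "x \<in> row 0 k" by blast
  then obtain i where i: "(0, i) \<in> C" "i \<in> {1..k}" by (cases x) auto
  then obtain B where B: "B \<in> P1" "i \<in> B" using partition_on_block_exists[OF partition1] by blast
  have "B \<in> T1"
  proof (rule ccontr)
    assume "B \<notin> T1"
    then have "C \<subseteq> Pair 0 ` B"
      using top_block_closed[of B] B by (intro comp_subset_if_closed[OF _ C(1) i(1)]) auto
    then show False using C(3) by auto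
  qed
  then have "((0, i), (1, i)) \<in> adj" using B by (auto simp: adj_iff)
  then have "(1, i) \<in> C" by (rule comp_closed[OF C(1) i(1)])
  then have "C = block_comp B" using comp_eq_comp_of[OF C(1)] block_comp_eq1[OF B] by simp
  then show "C \<in> block_comp ` T1" using \<open>B \<in> T1\<close> by blast
qed

lemma through_comps_subset2: "through_comps \<subseteq> block_comp ` T2"
proof
  fix C assume "C \<in> through_comps"
  then have C: "C \<in> comps" "C \<inter> row 0 k \<noteq> {}" "C \<inter> row 2 k \<noteq> {}" by (auto simp: through_comps_def)
  then obtain x where "x \<in> C" "x \<in> row 2 k" by blast
  then obtain i where i: "(2, i) \<in> C" "i \<in> {1..k}" by (cases x) auto
  then obtain B where B: "B \<in> P2" "i \<in> B" using partition_on_block_exists[OF partition2] by blast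
  have "B \<in> T2"
  proof (rule ccontr)
    assume "B \<notin> T2"
    then have "C \<subseteq> Pair 2 ` B"
      using bottom_block_closed[of B] B by (intro comp_subset_if_closed[OF _ C(1) i(1)]) auto
    then show False using C(2) by auto
  qed
  then have "((2, i), (1, i)) \<in> adj" using B by (auto simp: adj_iff)
  then have "(1, i) \<in> C" by (rule comp_closed[OF C(1) i(1)])
  then have "C = block_comp B" using comp_eq_comp_of[OF C(1)] block_comp_eq2[OF B] by simp
  then show "C \<in> block_comp ` T2" using \<open>B \<in> T2\<close> by blast
qed

lemma finite_partition1: "finite P1"
  using finite_elements[OF _ partition1] by simp

lemma finite_partition2: "finite P2"
  using finite_elements[OF _ partition2] by simp

lemma not_through1_if_loop:
  assumes B: "B \<in> P1" and loop: "block_comp B \<in> loop_comps"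
  shows "B \<notin> T1"
proof
  assume "B \<in> T1"
  have i: "Min B \<in> B" using Min_in_block1[OF B] .
  then have "(1, Min B) \<in> block_comp B"
    using block_comp_eq1[OF B] mem_comp_of_self block_in_range1[OF B] by (simp add: mem_verts_iff)
  moreover have "((1, Min B), (0, Min B)) \<in> adj" using B i \<open>B \<in> T1\<close> by (auto simp: adj_iff)
  ultimately have "(0, Min B) \<in> block_comp B"
    using comp_closed loop by (auto simp: loop_comps_def)
  then show False using loop by (auto simp: loop_comps_def)
qed

lemma not_through2_if_loop:
  assumes B: "B \<in> P2" and loop: "block_comp B \<in> loop_comps"
  shows "B \<notin> T2"
proof
  assume "B \<in> T2"
  have i: "Min B \<in> B" using Min_in_block2[OF B] .
  then have "(1, Min B) \<in> block_comp B"
    using block_comp_eq2[OF B] mem_comp_of_self block_in_range2[OF B] by (simp add: mem_verts_iff)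
  moreover have "((1, Min B), (2, Min B)) \<in> adj" using B i \<open>B \<in> T2\<close> by (auto simp: adj_iff)
  ultimately have "(2, Min B) \<in> block_comp B"
    using comp_closed loop by (auto simp: loop_comps_def)
  then show False using loop by (auto simp: loop_comps_def)
qed

lemma subfamilies_eq_if_block_comp_inj:
  assumes N1: "N1 \<subseteq> P1" and N2: "N2 \<subseteq> P2"
    and inj1: "inj_on block_comp N1" and inj2: "inj_on block_comp N2"
    and into2: "\<And>B B' i. B \<in> N1 \<Longrightarrow> B' \<in> P2 \<Longrightarrow> i \<in> B \<Longrightarrow> i \<in> B' \<Longrightarrow> B' \<in> N2"
    and into1: "\<And>B B' i. B \<in> P1 \<Longrightarrow> B' \<in> N2 \<Longrightarrow> i \<in> B \<Longrightarrow> i \<in> B' \<Longrightarrow> B \<in> N1"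
  shows "N1 = N2"
proof (rule partition_on_subfamilies_eq[OF partition1 partition2 N1 N2 _ _ _ _ into2 into1,
                                         where c = "\<lambda>i. comp_of (1, i)"])
  show "comp_of (1, i) = comp_of (1, j)" if "B \<in> N1" "i \<in> B" "j \<in> B" for B i j
    using block_comp_eq1 that N1 by blast
  show "comp_of (1, i) = comp_of (1, j)" if "B \<in> N2" "i \<in> B" "j \<in> B" for B i j
    using block_comp_eq2 that N2 by blast
  show "B = B'" if "B \<in> N1" "B' \<in> N1" "i \<in> B" "j \<in> B'" "comp_of (1, i) = comp_of (1, j)"
    for B B' i j
  proof -
    have "block_comp B = block_comp B'"
      using that N1 block_comp_eq1[of B i] block_comp_eq1[of B' j] by auto
    then show ?thesis using inj_onD[OF inj1] that(1,2) by blast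
  qed
  show "B = B'" if "B \<in> N2" "B' \<in> N2" "i \<in> B" "j \<in> B'" "comp_of (1, i) = comp_of (1, j)"
    for B B' i j
  proof -
    have "block_comp B = block_comp B'"
      using that N2 block_comp_eq2[of B i] block_comp_eq2[of B' j] by auto
    then show ?thesis using inj_onD[OF inj2] that(1,2) by blast
  qed
qed

lemma eq_if_card_comps_maximal:
  assumes loops1: "card loop_comps = card (P1 - T1)" and loops2: "card loop_comps = card (P2 - T2)"
    and throughs1: "card through_comps = card T1" and throughs2: "card through_comps = card T2"
  shows "P1 = P2 \<and> T1 = T2"
proof -
  have fin: "finite (P1 - T1)" "finite (P2 - T2)" "finite T1" "finite T2"
    using finite_partition1 finite_partition2 through1 through2 finite_subset by auto
  have loops_img1: "loop_comps = block_comp ` (P1 - T1)" and inj_loops1: "inj_on block_comp (P1 - T1)"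
    using subset_image_card_eq[OF fin(1) loop_comps_subset1 loops1] by auto
  have loops_img2: "loop_comps = block_comp ` (P2 - T2)" and inj_loops2: "inj_on block_comp (P2 - T2)"
    using subset_image_card_eq[OF fin(2) loop_comps_subset2 loops2] by auto
  have inj_throughs1: "inj_on block_comp T1"
    using subset_image_card_eq[OF fin(3) through_comps_subset1 throughs1] by auto
  have inj_throughs2: "inj_on block_comp T2"
    using subset_image_card_eq[OF fin(4) through_comps_subset2 throughs2] by auto
  have nonthrough_eq: "P1 - T1 = P2 - T2"
  proof (rule subfamilies_eq_if_block_comp_inj[OF _ _ inj_loops1 inj_loops2])
    show "B' \<in> P2 - T2" if "B \<in> P1 - T1" "B' \<in> P2" "i \<in> B" "i \<in> B'" for B B' i
    proof -
      have "block_comp B' \<in> loop_comps"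
        using that loops_img1 block_comp_eq1[of B i] block_comp_eq2[of B' i] by auto
      then show ?thesis using not_through2_if_loop that(2) by blast
    qed
    show "B \<in> P1 - T1" if "B \<in> P1" "B' \<in> P2 - T2" "i \<in> B" "i \<in> B'" for B B' i
    proof -
      have "block_comp B \<in> loop_comps"
        using that loops_img2 block_comp_eq1[of B i] block_comp_eq2[of B' i] by auto
      then show ?thesis using not_through1_if_loop that(1) by blast
    qed
  qed auto
  have "T1 = T2"
  proof (rule subfamilies_eq_if_block_comp_inj[OF through1 through2 inj_throughs1 inj_throughs2])
    show "B' \<in> T2" if "B \<in> T1" "B' \<in> P2" "i \<in> B" "i \<in> B'" for B B' i
      using that nonthrough_eq through1 partition_on_block_unique[OF partition1, of B B' i] by blast
    show "B \<in> T1" if "B \<in> P1" "B' \<in> T2" "i \<in> B" "i \<in> B'" for B B' i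
      using that nonthrough_eq through2 partition_on_block_unique[OF partition2, of B B' i] by blast
  qed
  then show ?thesis using nonthrough_eq through1 through2 by blast
qed

lemma block_comp_in_comps: "B \<in> P1 \<Longrightarrow> block_comp B \<in> comps"
  unfolding block_comp_def
  using Min_in_block1 block_in_range1 by (auto intro: comp_of_in_comps simp: mem_verts_iff)

lemma mid_in_block_comp: "B \<in> P1 \<Longrightarrow> i \<in> B \<Longrightarrow> (1, i) \<in> block_comp B"
  using block_comp_eq1 block_in_range1 mem_comp_of_self by (simp add: mem_verts_iff)

lemma comp_subset_column_if_same_partition:
  assumes same: "P2 = P1" and B: "B \<in> P1" and C: "C \<in> comps" "(r, i) \<in> C" "i \<in> B"
  shows "C \<subseteq> UNIV \<times> B"
proof (rule comp_subset_if_closed[OF _ C(1,2)])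
  fix u v assume uv: "(u, v) \<in> adj" and "u \<in> UNIV \<times> B"
  then obtain r j r' j' where u: "u = (r, j)" "j \<in> B" and v: "v = (r', j')" by (cases u; cases v) auto
  from uv[unfolded u v adj_iff, unfolded same] obtain B' where "B' \<in> P1" "j \<in> B'" "j' \<in> B'" by blast
  then show "v \<in> UNIV \<times> B" using partition_on_block_unique[OF partition1 _ B _ u(2)] v by blast
qed (use C in auto)

lemma inj_on_block_comp_if_same_partition:
  assumes "P2 = P1"
  shows "inj_on block_comp P1"
proof (rule inj_onI)
  fix B B' assume B: "B \<in> P1" and B': "B' \<in> P1" and eq: "block_comp B = block_comp B'"
  have "(1, Min B') \<in> block_comp B"
    unfolding eq using mid_in_block_comp[OF B' Min_in_block1[OF B']] .
  then have "Min B' \<in> B"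
    using comp_subset_column_if_same_partition[OF assms B block_comp_in_comps[OF B]
            mid_in_block_comp[OF B Min_in_block1[OF B]] Min_in_block1[OF B]]
    by blast
  then show "B = B'" using partition_on_block_unique[OF partition1 B B' _ Min_in_block1[OF B']] by blast
qed

lemma loop_comps_eq_if_same_diagram:
  assumes "P2 = P1" "T2 = T1"
  shows "loop_comps = block_comp ` (P1 - T1)"
proof
  show "loop_comps \<subseteq> block_comp ` (P1 - T1)" by (rule loop_comps_subset1)
  show "block_comp ` (P1 - T1) \<subseteq> loop_comps"
  proof
    fix C assume "C \<in> block_comp ` (P1 - T1)"
    then obtain B where B: "B \<in> P1 - T1" and C: "C = block_comp B" by blast
    have closed: "v \<in> Pair 1 ` B" if uv: "(u, v) \<in> adj" and "u \<in> Pair 1 ` B" for u v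
    proof -
      obtain j r' j' where u: "u = (1, j)" "j \<in> B" and v: "v = (r', j')"
        using \<open>u \<in> Pair 1 ` B\<close> by (cases v) auto
      from uv[unfolded u v adj_iff, unfolded assms] obtain B' where
        B': "B' \<in> P1" "j \<in> B'" "j' \<in> B'" "r' = 1 \<or> B' \<in> T1" by auto
      have "B' = B" using partition_on_block_unique[OF partition1 B'(1) _ B'(2) u(2)] B by blast
      then show ?thesis using B' B v by auto
    qed
    have "B \<in> P1" "Min B \<in> B" using B Min_in_block1 by auto
    then have "C \<subseteq> Pair 1 ` B"
      unfolding C using closed mid_in_block_comp
      by (intro comp_subset_if_closed[OF _ block_comp_in_comps, where u = "(1, Min B)"]) auto
    then show "C \<in> loop_comps"
      using C B block_comp_in_comps block_in_range1 by (auto simp: loop_comps_def)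
  qed
qed

lemma through_comps_eq_if_same_diagram:
  assumes "P2 = P1" "T2 = T1"
  shows "through_comps = block_comp ` T1"
proof
  show "through_comps \<subseteq> block_comp ` T1" by (rule through_comps_subset1)
  show "block_comp ` T1 \<subseteq> through_comps"
  proof
    fix C assume "C \<in> block_comp ` T1"
    then obtain B where B: "B \<in> T1" and C: "C = block_comp B" by blast
    define b where "b = Min B"
    have B1: "B \<in> P1" and b: "b \<in> B" "b \<in> {1..k}"
      using B through1 Min_in_block1 block_in_range1 unfolding b_def by blast+
    have C_comp: "C \<in> comps" and mid: "(1, b) \<in> C"
      using C block_comp_in_comps[OF B1] mid_in_block_comp[OF B1 b(1)] by auto
    have "((1, b), (0, b)) \<in> adj" "((1, b), (2, b)) \<in> adj"
      unfolding adj_iff using B B1 b assms by auto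
    then have "(0, b) \<in> C" "(2, b) \<in> C" using comp_closed[OF C_comp mid] by blast+
    then show "C \<in> through_comps" using C_comp b(2) by (auto simp: through_comps_def)
  qed
qed

lemma card_comps_if_same_diagram:
  assumes "P2 = P1" "T2 = T1"
  shows "card loop_comps = card (P1 - T1)" "card through_comps = card T1"
  using card_image[OF inj_on_subset[OF inj_on_block_comp_if_same_partition]] assms through1
    loop_comps_eq_if_same_diagram[OF assms] through_comps_eq_if_same_diagram[OF assms] by auto

lemma stack_comps_eq: "stack_comps k (diag_of (P1, T1)) (diag_of (P2, T2)) = comps"
  unfolding stack_comps_def comps_def verts_def adj_def ..

lemma loops_eq: "loops k (diag_of (P1, T1)) (diag_of (P2, T2)) = card loop_comps"
  unfolding loops_def stack_comps_eq loop_comps_def ..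

lemma lift_inter_row0:
  assumes "C \<subseteq> verts"
  shows "lift_up ` (C - row 1 k) \<inter> row 0 k = C \<inter> row 0 k"
proof -
  have "lift_up x \<in> row 0 k \<longleftrightarrow> x \<in> row 0 k" "lift_up x = x \<or> x \<in> row 2 k" if "x \<in> C" for x
    using that assms by (cases x; auto simp: lift_up_def mem_verts_iff)+
  then show ?thesis by (force simp: image_iff)
qed

lemma lift_inter_row1:
  assumes "C \<subseteq> verts"
  shows "lift_up ` (C - row 1 k) \<inter> row 1 k = lift_up ` (C \<inter> row 2 k)"
proof -
  have "lift_up x \<in> row 1 k \<longleftrightarrow> x \<in> row 2 k" if "x \<in> C" "x \<notin> row 1 k" for x
    using that assms by (cases x) (auto simp: lift_up_def mem_verts_iff)
  moreover have "x \<in> row 2 k \<Longrightarrow> x \<notin> row 1 k" for x by (cases x) auto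
  ultimately show ?thesis by blast
qed

lemma prop_num_eq: "prop_num k (diag_prod k (diag_of (P1, T1)) (diag_of (P2, T2))) = card through_comps"
proof -
  define lift where "lift C = lift_up ` (C - row 1 k)" for C
  have meets_iff: "lift C \<inter> row 0 k \<noteq> {} \<and> lift C \<inter> row 1 k \<noteq> {} \<longleftrightarrow> C \<in> through_comps"
    if "C \<in> comps" for C
    using lift_inter_row0 lift_inter_row1 comp_subset_verts[OF that] that
    by (auto simp: lift_def through_comps_def)
  have "C \<inter> row 0 k \<noteq> {} \<Longrightarrow> \<not> C \<subseteq> row 1 k" for C by fastforce
  then have "{B \<in> diag_prod k (diag_of (P1, T1)) (diag_of (P2, T2)). B \<inter> row 0 k \<noteq> {} \<and> B \<inter> row 1 k \<noteq> {}}
               = lift ` through_comps"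
    unfolding diag_prod_def stack_comps_eq lift_def[symmetric] using meets_iff
    by (auto simp: through_comps_def)
  moreover have "inj_on lift through_comps"
  proof (rule inj_onI)
    fix C C' assume C: "C \<in> through_comps" and C': "C' \<in> through_comps" and eq: "lift C = lift C'"
    obtain x where x: "x \<in> C" "x \<in> row 0 k" using C by (auto simp: through_comps_def)
    have comps: "C \<in> comps" "C' \<in> comps" using C C' by (auto simp: through_comps_def)
    then have "C \<inter> row 0 k = C' \<inter> row 0 k"
      using eq lift_inter_row0 comp_subset_verts unfolding lift_def by metis
    then have "x \<in> C'" using x by blast
    then show "C = C'" using comp_eq_comp_of comps x(1) by metis
  qed
  ultimately show ?thesis unfolding prop_num_def by (simp add: card_image)
qed

end

lemma finite_J_set: "finite (J_set k s)"
proof (rule finite_subset)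
  show "J_set k s \<subseteq> Pow (Pow {1..k}) \<times> Pow (Pow {1..k})"
    unfolding J_set_def partition_on_def by auto
qed simp

lemma J_setE:
  assumes "D \<in> J_set k s"
  obtains P T where "D = (P, T)" "partition_on {1..k} P" "T \<subseteq> P" "card T = s"
  using assms unfolding J_set_def by auto

lemma gram_diag:
  assumes "D \<in> J_set k s"
  shows "gram k s D D = [:0, 1:] ^ card (fst D - snd D)"
proof -
  obtain P T where D: "D = (P, T)" and "partition_on {1..k} P" "T \<subseteq> P" "card T = s"
    using J_setE[OF assms] by metis
  interpret diagram_pair k P T P T by unfold_locales fact+
  show ?thesis
    using card_comps_if_same_diagram \<open>card T = s\<close> unfolding gram_def D prop_num_eq loops_eq by simp
qed

lemma gram_off_diag:
  assumes D: "D \<in> J_set k s" and E: "E \<in> J_set k s" and "D \<noteq> E" and nonzero: "gram k s D E \<noteq> 0"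
  shows "\<exists>l. gram k s D E = [:0, 1:] ^ l \<and> 2 * l < card (fst D - snd D) + card (fst E - snd E)"
proof -
  obtain P1 T1 where D_eq: "D = (P1, T1)" and "partition_on {1..k} P1" "T1 \<subseteq> P1" "card T1 = s"
    using J_setE[OF D] by metis
  obtain P2 T2 where E_eq: "E = (P2, T2)" and "partition_on {1..k} P2" "T2 \<subseteq> P2" "card T2 = s"
    using J_setE[OF E] by metis
  interpret diagram_pair k P1 T1 P2 T2 by unfold_locales fact+
  have throughs: "card through_comps = s"
    using nonzero unfolding gram_def D_eq E_eq prop_num_eq by (auto split: if_splits)
  then have gram_eq: "gram k s D E = [:0, 1:] ^ card loop_comps"
    unfolding gram_def D_eq E_eq prop_num_eq loops_eq by simp
  have "card loop_comps \<le> card (P1 - T1)" "card loop_comps \<le> card (P2 - T2)"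
    using surj_card_le[OF _ loop_comps_subset1] surj_card_le[OF _ loop_comps_subset2]
      finite_partition1 finite_partition2 by auto
  moreover have "\<not> (card loop_comps = card (P1 - T1) \<and> card loop_comps = card (P2 - T2))"
    using eq_if_card_comps_maximal throughs \<open>card T1 = s\<close> \<open>card T2 = s\<close> \<open>D \<noteq> E\<close>
    unfolding D_eq E_eq by auto
  ultimately show ?thesis using gram_eq unfolding D_eq E_eq by auto
qed

theorem lemma3p9:
  fixes k s :: nat
  assumes "1 \<le> k" and "s \<le> k"
  shows "gram_det k s \<noteq> 0 \<and> lead_coeff (gram_det k s) = 1"
proof -
  have "degree (gram_det k s) = (\<Sum>D\<in>J_set k s. card (fst D - snd D)) \<and> lead_coeff (gram_det k s) = 1"
    unfolding gram_det_def
    by (rule det_on_monic_if_diagonal_dominant[OF finite_J_set]) (auto intro: gram_diag gram_off_diag)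
  then show ?thesis by auto
qed

end
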